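(* Consider particles indexed by $x\in[0,1]$ with trajectories $y(t,x)$ solving $\frac{d^2y}{dt^2}=F(y)$, $y(0,x)=x$, $\frac{dy}{dt}(0,x)=v(x)$, where $v$ is a $C^1$ function on $[0,1]$. Say there are no collisions if $y(t,x)\ne y(t,x')$ for all $t\ge0$ and all $x\ne x'$ in $[0,1]$. 1) (one gap) Let $F_1>0$, $F_2\ge0$, $A>1$, and $F(x)=F_1$ for $0\le x<A$, $F(x)=F_2$ for $x\ge A$. If $v(x)=0$ for all $x\in[0,1]$, then there are no collisions if and only if $F_2\ge F_1$. If $v(x)\ge0$ for all $x\in[0,1]$, then there are no collisions if and only if for all $x\in[0,1]$ both $$-2(A-x)v'(x)<v(x)+\sqrt{D(x)}\quad\text{and}\quad v'(x)\big((F_1-F_2)v(x)+F_2\sqrt{D(x)}\big)\ge F_1(F_1-F_2)$$ hold, where $D(x)=v^2(x)+2F_1(A-x)$. 2) (two gaps) Let $v(x)=0$ for all $x\in[0,1]$, let $0<F_2<F_1$, $F_2<F_3$, $1<A<B$, and $F(x)=F_1$ for $0\le x<A$, $F(x)=F_2$ for $x\in[A,B)$, $F(x)=F_3$ for $x\ge B$. Then there are no collisions if and only if $$B-A\le\alpha(A-1),\qquad \alpha=\frac{F_1(F_3-F_1)\big(F_3(F_1-F_2)+F_1(F_3-F_2)\big)}{(F_1-F_2)^2F_3^2}.$$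
   Context: One-dimensional continuum of non-interacting unit-mass point particles, each $x\in[0,1]$ starting at position $x$ with velocity $v(x)$ and moving under the piecewise constant external force $F$. *)

theory Defs
  imports "HOL-Analysis.Analysis"
begin

text \<open>A trajectory of a unit-mass particle under the (possibly discontinuous) force field F,
  starting at position x0 with velocity v0, for times t \<ge> 0, in the Caratheodory
  (integral) sense: y is differentiable on [0,\<infinity>) with derivative y', and
  y'(t) = v0 + integral over [0,t] of F(y(s)).\<close>
definition trajectory :: "(real \<Rightarrow> real) \<Rightarrow> real \<Rightarrow> real \<Rightarrow> (real \<Rightarrow> real) \<Rightarrow> bool" where
  "trajectory F x0 v0 y \<longleftrightarrow>
     (\<exists>y'. y 0 = x0 \<and> y' 0 = v0 \<and>
        (\<forall>t\<ge>0. (y has_real_derivative y' t) (at t within {0..})) \<and>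
        (\<forall>t\<ge>0. ((\<lambda>s. F (y s)) has_integral (y' t - v0)) {0..t}))"

definition no_collisions :: "(real \<Rightarrow> real) \<Rightarrow> (real \<Rightarrow> real) \<Rightarrow> bool" where
  "no_collisions F v \<longleftrightarrow>
     (\<forall>y :: real \<Rightarrow> real \<Rightarrow> real.
        (\<forall>x\<in>{0..1}. trajectory F x (v x) (\<lambda>t. y t x)) \<longrightarrow>
        (\<forall>t\<ge>0. \<forall>x\<in>{0..1}. \<forall>x'\<in>{0..1}. x \<noteq> x' \<longrightarrow> y t x \<noteq> y t x'))"

end

theory Submission
  imports Defs
begin

(* The force is nonnegative, so every particle moves monotonically to the right; its trajectory
   is therefore unique and piecewise a free fall: with acceleration F1 until it reaches A at a
   time T(x), then with F2 (and with F3 after B).  Hence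
     y(t,x) = x + v(x) t + F1 t^2/2 + (F2 - F1)/2 * max(t - T(x), 0)^2  (+ a term for B),
   which is differentiable in x.  No collisions means that x \<mapsto> y(t,x) is injective for all t;
   since y is continuous and y(0,x) = x, it must then be increasing, so dy/dx \<ge> 0 is necessary,
   while dy/dx > 0 is sufficient.  After the last crossing dy/dx is affine in t,
   J(x) + (t - T(x)) K(x), and earlier it is positive once J(x) > 0; so there are no collisions
   iff J > 0 and K \<ge> 0 on [0,1] (stretch_at_arrival, resp. stretch_at_B, and stretch_rate below),
   which unfolds to the stated inequalities. *)

definition ramp_sq :: "real \<Rightarrow> real" where
  "ramp_sq u = (max u 0)\<^sup>2"

lemma ramp_sq_has_real_derivative: "(ramp_sq has_real_derivative 2 * max u 0) (at u)"
proof (cases u "0::real" rule: linorder_cases)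
  case less
  have "\<forall>\<^sub>F z in nhds u. ramp_sq z = 0"
    using eventually_nhds_in_open[of "{..<0}" u] less by (auto elim!: eventually_mono simp: ramp_sq_def)
  then have "(ramp_sq has_real_derivative 0) (at u) \<longleftrightarrow> ((\<lambda>_. 0) has_real_derivative 0) (at u)"
    by (intro DERIV_cong_ev) auto
  then show ?thesis
    using less by simp
next
  case greater
  have "\<forall>\<^sub>F z in nhds u. ramp_sq z = z\<^sup>2"
    using eventually_nhds_in_open[of "{0<..}" u] greater by (auto elim!: eventually_mono simp: ramp_sq_def)
  then have "(ramp_sq has_real_derivative 2 * u) (at u) \<longleftrightarrow> ((\<lambda>z. z\<^sup>2) has_real_derivative 2 * u) (at u)"
    by (intro DERIV_cong_ev) auto
  moreover have "((\<lambda>z. z\<^sup>2) has_real_derivative 2 * u) (at u)"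
    by (auto intro!: derivative_eq_intros)
  ultimately show ?thesis
    using greater by simp
next
  case equal
  have "((\<lambda>z. ramp_sq z / z) \<longlongrightarrow> 0) (at 0)"
  proof (rule Lim_null_comparison[where g=abs])
    show "\<forall>\<^sub>F z in at 0. norm (ramp_sq z / z) \<le> \<bar>z\<bar>"
      by (intro always_eventually allI) (auto simp: ramp_sq_def power2_eq_square abs_mult max_def)
    show "(abs \<longlongrightarrow> 0) (at (0::real))"
      using tendsto_rabs[OF tendsto_ident_at[of "0::real" UNIV]] by simp
  qed
  then show ?thesis
    using equal by (simp add: has_field_derivative_iff ramp_sq_def)
qed

lemma ramp_sq_chain [derivative_intros]:
  "(f has_real_derivative f') (at x within S) \<Longrightarrow>
    ((\<lambda>x. ramp_sq (f x)) has_real_derivative 2 * max (f x) 0 * f') (at x within S)"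
  using DERIV_chain2[OF ramp_sq_has_real_derivative] .

lemma has_integral_step:
  fixes T t :: real
  assumes "0 \<le> T" "0 \<le> t"
  shows "((\<lambda>s. if T \<le> s then 1 else 0) has_integral max (t - T) 0) {0..t}"
proof (cases "t \<le> T")
  case True
  have "((\<lambda>s. if T \<le> s then 1 else 0::real) has_integral 0) {0..t}"
    by (rule has_integral_spike_finite[of "{T}", OF _ _ has_integral_0]) (use True in auto)
  then show ?thesis
    using True by simp
next
  case False
  have left: "((\<lambda>s. if T \<le> s then 1 else 0::real) has_integral 0) {0..T}"
    by (rule has_integral_spike_finite[of "{T}", OF _ _ has_integral_0]) auto
  have "((\<lambda>s. 1::real) has_integral (t - T)) {T..t}"
    using has_integral_const_real[of "1::real" T t] False by simp
  then have right: "((\<lambda>s. if T \<le> s then 1 else 0::real) has_integral (t - T)) {T..t}"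
    by (rule has_integral_eq[rotated]) auto
  show ?thesis
    using has_integral_combine[OF assms(1) _ left right] False by simp
qed

lemma continuous_inj_imp_strict_mono_on:
  fixes f :: "real \<Rightarrow> real"
  assumes cont: "continuous_on {a..b} f" and inj: "inj_on f {a..b}" and ends: "f a < f b"
  shows "strict_mono_on {a..b} f"
proof (rule strict_mono_onI)
  have between: "f a < f x \<and> f x < f b" if "a < x" "x < b" for x
    using continuous_inj_imp_mono[OF that cont inj] ends by auto
  fix p q assume "p \<in> {a..b}" "q \<in> {a..b}" "p < q"
  then consider "p = a" "q = b" | "p = a" "q < b" | "a < p" "q = b" | "a < p" "q < b"
    by fastforce
  then show "f p < f q"
  proof cases
    case 4
    have "continuous_on {p..b} f" "inj_on f {p..b}"
      using cont inj \<open>a < p\<close> by (auto intro: continuous_on_subset inj_on_subset)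
    then show ?thesis
      using continuous_inj_imp_mono[of p q b f] 4 \<open>p < q\<close> between by force
  qed (use ends between \<open>p < q\<close> in auto)
qed

lemma mono_on_imp_deriv_within_nonneg:
  fixes f :: "real \<Rightarrow> real"
  assumes mono: "mono_on {a..b} f" and "a < b" and x: "x \<in> {a..b}"
    and deriv: "(f has_real_derivative D) (at x within {a..b})"
  shows "0 \<le> D"
proof (rule ccontr)
  assume "\<not> 0 \<le> D"
  then have "D < 0" by simp
  show False
  proof (cases "x < b")
    case True
    obtain d where "d > 0" and dec: "\<And>h. 0 < h \<Longrightarrow> x + h \<in> {a..b} \<Longrightarrow> h < d \<Longrightarrow> f (x + h) < f x"
      using has_real_derivative_neg_dec_right[OF deriv \<open>D < 0\<close>] by blast
    define h where "h = min (d / 2) (b - x)"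
    have h: "0 < h" "h < d" "x + h \<in> {a..b}"
      using \<open>d > 0\<close> True x by (auto simp: h_def)
    have "f x \<le> f (x + h)"
      using mono_onD[OF mono x h(3)] h(1) by simp
    with dec[OF h(1,3,2)] show False by simp
  next
    case False
    then have "x = b" using x by simp
    obtain d where "d > 0" and dec: "\<And>h. 0 < h \<Longrightarrow> x - h \<in> {a..b} \<Longrightarrow> h < d \<Longrightarrow> f x < f (x - h)"
      using has_real_derivative_neg_dec_left[OF deriv \<open>D < 0\<close>] by blast
    define h where "h = min (d / 2) (b - a)"
    have h: "0 < h" "h < d" "x - h \<in> {a..b}"
      using \<open>d > 0\<close> \<open>a < b\<close> \<open>x = b\<close> by (auto simp: h_def)
    have "f (x - h) \<le> f x"
      using mono_onD[OF mono h(3) x] h(1) by simp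
    with dec[OF h(1,3,2)] show False by simp
  qed
qed

lemma deriv_pos_imp_strict_mono_on:
  fixes f f' :: "real \<Rightarrow> real"
  assumes deriv: "\<And>x. x \<in> {a..b} \<Longrightarrow> (f has_real_derivative f' x) (at x within {a..b})"
    and pos: "\<And>x. x \<in> {a..b} \<Longrightarrow> 0 < f' x"
  shows "strict_mono_on {a..b} f"
proof (rule strict_mono_onI)
  fix p q assume pq: "p \<in> {a..b}" "q \<in> {a..b}" "p < q"
  have "continuous_on {p..q} f"
    using DERIV_continuous_on[OF deriv] pq by (meson atLeastatMost_subset_iff atLeastAtMost_iff continuous_on_subset)
  moreover have "\<exists>y. (f has_real_derivative y) (at x) \<and> 0 < y" if "p < x" "x < q" for x
  proof -
    have "x \<in> interior {a..b}" using pq that by simp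
    then show ?thesis
      using deriv[of x] pos[of x] that pq unfolding at_within_interior[OF \<open>x \<in> interior {a..b}\<close>] by auto
  qed
  ultimately show "f p < f q"
    using DERIV_pos_imp_increasing_open[OF \<open>p < q\<close>] by blast
qed

section \<open>Motion in a nonnegative force field\<close>

lemma trajectoryI:
  assumes "\<And>t. 0 \<le> t \<Longrightarrow> (y has_real_derivative y' t) (at t)" "y 0 = x0" "y' 0 = v0"
    and "\<And>t. 0 \<le> t \<Longrightarrow> ((\<lambda>s. F (y s)) has_integral (y' t - v0)) {0..t}"
  shows "trajectory F x0 v0 y"
  unfolding trajectory_def using assms by (intro exI[of _ y']) (auto intro: has_field_derivative_at_within)

locale motion =
  fixes F y y' :: "real \<Rightarrow> real" and v0 :: real
  assumes position_deriv: "\<And>t. 0 \<le> t \<Longrightarrow> (y has_real_derivative y' t) (at t within {0..})"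
    and velocity_integral: "\<And>t. 0 \<le> t \<Longrightarrow> ((\<lambda>s. F (y s)) has_integral (y' t - v0)) {0..t}"

lemma trajectoryE:
  assumes "trajectory F x0 v0 y"
  obtains y' where "motion F y y' v0" "y 0 = x0" "y' 0 = v0"
  using assms unfolding trajectory_def motion_def by blast

context motion
begin

lemma velocity_increment:
  assumes "0 \<le> s" "s \<le> t"
  shows "((\<lambda>r. F (y r)) has_integral (y' t - y' s)) {s..t}"
proof -
  have upto_t: "((\<lambda>r. F (y r)) has_integral (y' t - v0)) {0..t}"
    using velocity_integral assms by simp
  have upto_s: "((\<lambda>r. F (y r)) has_integral (y' s - v0)) {0..s}"
    using velocity_integral assms by simp
  have "(\<lambda>r. F (y r)) integrable_on {s..t}"
    using integrable_subinterval_real[OF has_integral_integrable[OF upto_t]] assms by simp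
  moreover have "integral {0..s} (\<lambda>r. F (y r)) + integral {s..t} (\<lambda>r. F (y r)) = integral {0..t} (\<lambda>r. F (y r))"
    using Henstock_Kurzweil_Integration.integral_combine[OF assms has_integral_integrable[OF upto_t]] .
  then have "integral {s..t} (\<lambda>r. F (y r)) = y' t - y' s"
    unfolding integral_unique[OF upto_s] integral_unique[OF upto_t] by simp
  ultimately show ?thesis
    by (metis has_integral_integral)
qed

lemma velocity_mono:
  assumes "\<And>z. 0 \<le> F z" "0 \<le> s" "s \<le> t"
  shows "y' s \<le> y' t"
  using has_integral_nonneg[OF velocity_increment[OF assms(2,3)]] assms(1) by simp

lemma position_continuous: "continuous_on {0..} y"
  using position_deriv by (intro DERIV_continuous_on) auto

lemma position_mono:
  assumes "\<And>r. s \<le> r \<Longrightarrow> r \<le> t \<Longrightarrow> 0 \<le> y' r" "0 \<le> s" "s \<le> t"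
  shows "y s \<le> y t"
proof (rule DERIV_nonneg_imp_increasing_open[OF assms(3)])
  show "continuous_on {s..t} y"
    by (rule continuous_on_subset[OF position_continuous]) (use assms(2) in auto)
  fix r assume r: "s < r" "r < t"
  then have "r \<in> interior {0..}"
    using assms(2) by simp
  then show "\<exists>D. (y has_real_derivative D) (at r) \<and> 0 \<le> D"
    using position_deriv[of r] assms(1)[of r] r assms(2)
    unfolding at_within_interior[OF \<open>r \<in> interior {0..}\<close>] by auto
qed

lemma constant_force_motion:
  assumes "0 \<le> t0" "t0 \<le> t1" and const: "\<And>s. t0 \<le> s \<Longrightarrow> s < t1 \<Longrightarrow> F (y s) = c"
    and t: "t0 \<le> t" "t \<le> t1"
  shows "y' t = y' t0 + c * (t - t0)" and "y t = y t0 + y' t0 * (t - t0) + c * (t - t0)\<^sup>2 / 2"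
proof -
  have velocity: "y' s = y' t0 + c * (s - t0)" if "t0 \<le> s" "s \<le> t1" for s
  proof -
    have "((\<lambda>r. c) has_integral (c * (s - t0))) {t0..s}"
      using has_integral_const_real[of c t0 s] that by (simp add: mult.commute)
    then have force: "((\<lambda>r. F (y r)) has_integral (c * (s - t0))) {t0..s}"
      by (intro has_integral_spike_finite[of "{t1}", OF _ _ \<open>((\<lambda>r. c) has_integral _) _\<close>]) (use const that in auto)
    then show ?thesis
      using has_integral_unique[OF velocity_increment[OF assms(1) that(1)] force] by simp
  qed
  then show "y' t = y' t0 + c * (t - t0)"
    using t .
  define g where "g s = y s - (y t0 + y' t0 * (s - t0) + c * (s - t0)\<^sup>2 / 2)" for s
  have g_deriv: "(g has_derivative (\<lambda>h. 0)) (at s within {t0..t1})" if s: "s \<in> {t0..t1}" for s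
  proof -
    have "(y has_real_derivative y' s) (at s within {0..})"
      using position_deriv s assms(1) by simp
    then have y_deriv: "(y has_real_derivative y' s) (at s within {t0..t1})"
      by (rule has_field_derivative_subset) (use assms(1) in auto)
    have "(g has_real_derivative y' s - (y' t0 + c * (s - t0))) (at s within {t0..t1})"
      unfolding g_def by (rule derivative_eq_intros y_deriv refl | simp)+
    then show ?thesis
      using velocity[of s] s by (simp add: has_field_derivative_def lambda_zero)
  qed
  have "g t = g t0"
    by (rule has_derivative_zero_unique[of "{t0..t1}" g]) (use g_deriv t in auto)
  then show "y t = y t0 + y' t0 * (t - t0) + c * (t - t0)\<^sup>2 / 2"
    by (simp add: g_def)
qed

end

(* Speed and time at which a particle starting with speed w and constant acceleration c has
   covered the distance d. *)
definition crossing_speed :: "real \<Rightarrow> real \<Rightarrow> real \<Rightarrow> real" where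
  "crossing_speed c w d = sqrt (w\<^sup>2 + 2 * c * d)"

definition crossing_time :: "real \<Rightarrow> real \<Rightarrow> real \<Rightarrow> real" where
  "crossing_time c w d = (crossing_speed c w d - w) / c"

context
  fixes c w d :: real
  assumes c: "0 < c" and w: "0 \<le> w" and d: "0 < d"
begin

lemma crossing_speed_sq: "(crossing_speed c w d)\<^sup>2 = w\<^sup>2 + 2 * c * d"
  unfolding crossing_speed_def using c d w by simp

lemma crossing_speed_gt: "w < crossing_speed c w d"
  unfolding crossing_speed_def using c d by (intro real_less_rsqrt) simp

lemma crossing_time_pos: "0 < crossing_time c w d"
  unfolding crossing_time_def using crossing_speed_gt c by simp

lemma crossing_speed_eq: "w + c * crossing_time c w d = crossing_speed c w d"
  unfolding crossing_time_def using c by simp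

lemma crossing_distance: "w * crossing_time c w d + c * (crossing_time c w d)\<^sup>2 / 2 = d"
proof -
  have "w * crossing_time c w d + c * (crossing_time c w d)\<^sup>2 / 2 = ((crossing_speed c w d)\<^sup>2 - w\<^sup>2) / (2 * c)"
    unfolding crossing_time_def using c by (simp add: field_simps power2_eq_square)
  then show ?thesis
    unfolding crossing_speed_sq using c by simp
qed

lemma before_crossing:
  assumes "0 \<le> s" "s < crossing_time c w d"
  shows "w * s + c * s\<^sup>2 / 2 < d"
proof -
  have "w * s \<le> w * crossing_time c w d"
    using w assms by (simp add: mult_left_mono)
  moreover have "c * s\<^sup>2 < c * (crossing_time c w d)\<^sup>2"
    using c assms by (simp add: power_strict_mono)
  ultimately show ?thesis
    using crossing_distance by linarith
qed

end

context motion
begin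

lemma motion_crossing:
  assumes F_nonneg: "\<And>z. 0 \<le> F z" and t0: "0 \<le> t0" and start: "y t0 = p" "y' t0 = w"
    and "0 \<le> w" "0 < c" "p < a" and F_const: "\<And>z. p \<le> z \<Longrightarrow> z < a \<Longrightarrow> F z = c"
  defines "\<tau> \<equiv> crossing_time c w (a - p)"
  shows "\<And>t. t0 \<le> t \<Longrightarrow> t \<le> t0 + \<tau> \<Longrightarrow> y t = p + w * (t - t0) + c * (t - t0)\<^sup>2 / 2"
    and "y (t0 + \<tau>) = a" "y' (t0 + \<tau>) = crossing_speed c w (a - p)"
    and "\<And>t. t0 + \<tau> \<le> t \<Longrightarrow> a \<le> y t"
proof -
  have \<tau>: "0 < \<tau>"
    unfolding \<tau>_def using crossing_time_pos assms by simp
  have speed: "0 \<le> y' t" if "t0 \<le> t" for t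
    using velocity_mono[OF F_nonneg t0 that] start \<open>0 \<le> w\<close> by simp
  have above_p: "p \<le> y t" if "t0 \<le> t" for t
    using position_mono[OF _ t0 that] speed start by simp
  have motion_while_below: "y s = p + w * (s - t0) + c * (s - t0)\<^sup>2 / 2"
    if "t0 \<le> s" "s \<le> m" "\<And>r. t0 \<le> r \<Longrightarrow> r < m \<Longrightarrow> y r < a" for s m
    using constant_force_motion(2)[of t0 m c s] that t0 F_const above_p start by force
  have below: "y t < a" if "t0 \<le> t" "t < t0 + \<tau>" for t
  proof (rule ccontr)
    \<comment> \<open>Up to the first time Inf S at which a is reached, the motion is the free quadratic one,
      which stays below a before t0 + \<tau>.\<close>
    assume "\<not> y t < a"
    define S where "S = {t0..t} \<inter> y -` {a..}"
    have "closed S"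
      unfolding S_def using position_continuous t0
      by (intro continuous_closed_preimage) (auto intro: continuous_on_subset)
    moreover have "S \<noteq> {}" "bdd_below S"
      using \<open>\<not> y t < a\<close> that unfolding S_def by auto
    ultimately have "Inf S \<in> S"
      by (rule closed_contains_Inf[rotated 2])
    then have m: "t0 \<le> Inf S" "Inf S \<le> t" "a \<le> y (Inf S)"
      unfolding S_def by auto
    have "y r < a" if "t0 \<le> r" "r < Inf S" for r
      using cInf_lower[of r S] \<open>bdd_below S\<close> that m unfolding S_def by force
    then have "y (Inf S) = p + w * (Inf S - t0) + c * (Inf S - t0)\<^sup>2 / 2"
      using motion_while_below m by blast
    also have "\<dots> < a"
      using before_crossing[of c w "a - p" "Inf S - t0"] assms m that unfolding \<tau>_def by simp
    finally show False
      using m by simp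
  qed
  show on_interval: "y t = p + w * (t - t0) + c * (t - t0)\<^sup>2 / 2" if "t0 \<le> t" "t \<le> t0 + \<tau>" for t
    using motion_while_below[OF that] below by blast
  show "y (t0 + \<tau>) = a"
    using on_interval[of "t0 + \<tau>"] \<tau> crossing_distance[of c w "a - p"] assms unfolding \<tau>_def by simp
  show "y' (t0 + \<tau>) = crossing_speed c w (a - p)"
    using constant_force_motion(1)[of t0 "t0 + \<tau>" c "t0 + \<tau>"] \<tau> t0 F_const above_p below start
      crossing_speed_eq[of c w "a - p"] assms unfolding \<tau>_def by force
  show "a \<le> y t" if "t0 + \<tau> \<le> t" for t
    using position_mono[OF _ _ that] speed \<tau> t0 \<open>y (t0 + \<tau>) = a\<close> by simp
qed

lemma motion_beyond:
  assumes "0 \<le> t0" and above: "\<And>t. t0 \<le> t \<Longrightarrow> a \<le> y t" and F_const: "\<And>z. a \<le> z \<Longrightarrow> F z = c"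
    and "t0 \<le> t"
  shows "y t = y t0 + y' t0 * (t - t0) + c * (t - t0)\<^sup>2 / 2"
  using constant_force_motion(2)[of t0 t c t] assms by simp

end

section \<open>Collisions and the spatial derivative of the flow\<close>

lemma deriv_nonneg_if_no_collisions:
  fixes Y :: "real \<Rightarrow> real \<Rightarrow> real"
  assumes nc: "no_collisions F v"
    and traj: "\<And>x. x \<in> {0..1} \<Longrightarrow> trajectory F x (v x) (Y x)"
    and t: "0 \<le> t" and x: "x \<in> {0..1}"
    and cont: "continuous_on {0..1} (\<lambda>x. Y x t)"
    and deriv: "((\<lambda>x. Y x t) has_real_derivative D) (at x within {0..1})"
  shows "0 \<le> D"
proof -
  have "\<forall>\<tau>\<ge>0. \<forall>x\<in>{0..1}. \<forall>x'\<in>{0..1}. x \<noteq> x' \<longrightarrow> Y x \<tau> \<noteq> Y x' \<tau>"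
    using spec[OF nc[unfolded no_collisions_def], of "\<lambda>t x. Y x t"] traj by simp
  then have inj: "inj_on (\<lambda>x. Y x \<tau>) {0..1}" if "0 \<le> \<tau>" for \<tau>
    using that unfolding inj_on_def by blast
  have start: "Y x 0 = x" and cont_time: "continuous_on {0..} (Y x)" if "x \<in> {0..1}" for x
    using traj[OF that] unfolding trajectory_def by (auto intro: DERIV_continuous_on)
  \<comment> \<open>The end particles stay ordered, and a continuous injective map with ordered ends increases.\<close>
  have "Y 0 t < Y 1 t"
  proof (rule ccontr)
    assume "\<not> Y 0 t < Y 1 t"
    moreover have "continuous_on {0..t} (\<lambda>\<tau>. Y 1 \<tau> - Y 0 \<tau>)"
      using cont_time[of 0] cont_time[of 1] by (auto intro!: continuous_intros intro: continuous_on_subset)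
    ultimately obtain \<tau> where "0 \<le> \<tau>" "Y 1 \<tau> - Y 0 \<tau> = 0"
      using IVT2'[of "\<lambda>\<tau>. Y 1 \<tau> - Y 0 \<tau>" t 0 0] start t by force
    then show False
      using inj_onD[OF inj[of \<tau>], of 1 0] by auto
  qed
  then have "strict_mono_on {0..1} (\<lambda>x. Y x t)"
    using continuous_inj_imp_strict_mono_on[OF cont inj[OF t]] by simp
  then show ?thesis
    using mono_on_imp_deriv_within_nonneg[OF strict_mono_on_imp_mono_on _ x deriv] by simp
qed

lemma no_collisions_if_deriv_pos:
  fixes Y Dx :: "real \<Rightarrow> real \<Rightarrow> real"
  assumes uniq: "\<And>x y t. x \<in> {0..1} \<Longrightarrow> trajectory F x (v x) y \<Longrightarrow> 0 \<le> t \<Longrightarrow> y t = Y x t"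
    and deriv: "\<And>x t. x \<in> {0..1} \<Longrightarrow> 0 \<le> t \<Longrightarrow>
      ((\<lambda>x. Y x t) has_real_derivative Dx t x) (at x within {0..1})"
    and pos: "\<And>x t. x \<in> {0..1} \<Longrightarrow> 0 \<le> t \<Longrightarrow> 0 < Dx t x"
  shows "no_collisions F v"
  unfolding no_collisions_def
proof (intro allI impI ballI)
  fix y :: "real \<Rightarrow> real \<Rightarrow> real" and t x x' :: real
  assume traj: "\<forall>x\<in>{0..1}. trajectory F x (v x) (\<lambda>t. y t x)"
    and "0 \<le> t" "x \<in> {0..1}" "x' \<in> {0..1}" "x \<noteq> x'"
  have "strict_mono_on {0..1} (\<lambda>x. Y x t)"
    using deriv pos \<open>0 \<le> t\<close> by (intro deriv_pos_imp_strict_mono_on) auto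
  then have "Y x t \<noteq> Y x' t"
    using strict_mono_on_imp_inj_on \<open>x \<in> {0..1}\<close> \<open>x' \<in> {0..1}\<close> \<open>x \<noteq> x'\<close> by (metis inj_onD)
  then show "y t x \<noteq> y t x'"
    using uniq[of x "\<lambda>t. y t x" t] uniq[of x' "\<lambda>t. y t x'" t] traj \<open>0 \<le> t\<close> \<open>x \<in> {0..1}\<close> \<open>x' \<in> {0..1}\<close>
    by simp
qed

lemma exists_pos_affine_neg:
  fixes a b :: real
  assumes "a < 0 \<or> b < 0"
  shows "\<exists>s>0. a + s * b < 0"
proof (cases "b < 0")
  case True
  define s where "s = (\<bar>a\<bar> + 1) / - b"
  have "a + s * b = a - \<bar>a\<bar> - 1"
    using True by (simp add: s_def field_simps)
  moreover have "0 < s"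
    unfolding s_def using True by (intro divide_pos_pos) auto
  ultimately show ?thesis
    by auto
next
  case False
  then have "a < 0" "0 \<le> b"
    using assms by auto
  define s where "s = - a / (2 * b + 1)"
  have "(a + s * b) * (2 * b + 1) = a * (b + 1)"
    using \<open>0 \<le> b\<close> by (simp add: s_def field_simps)
  moreover have "a * (b + 1) < 0"
    using \<open>a < 0\<close> \<open>0 \<le> b\<close> by (simp add: mult_neg_pos)
  ultimately have "(a + s * b) * (2 * b + 1) < 0"
    by simp
  then have "a + s * b < 0"
    using \<open>0 \<le> b\<close> by (simp add: mult_less_0_iff)
  moreover have "0 < s"
    using \<open>a < 0\<close> \<open>0 \<le> b\<close> by (simp add: s_def divide_neg_pos)
  ultimately show ?thesis
    by blast
qed

section \<open>One gap\<close>

locale one_gap =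
  fixes F1 F2 A :: real and v v' :: "real \<Rightarrow> real"
  assumes F1_pos: "0 < F1" and F2_nonneg: "0 \<le> F2" and A_gt_1: "1 < A"
    and v_deriv: "\<And>x. x \<in> {0..1} \<Longrightarrow> (v has_real_derivative v' x) (at x within {0..1})"
    and v_nonneg: "\<And>x. x \<in> {0..1} \<Longrightarrow> 0 \<le> v x"
begin

definition force :: "real \<Rightarrow> real" where
  "force = (\<lambda>z. if z < A then F1 else F2)"

definition arrival_speed :: "real \<Rightarrow> real" where
  "arrival_speed x = crossing_speed F1 (v x) (A - x)"

definition arrival_time :: "real \<Rightarrow> real" where
  "arrival_time x = crossing_time F1 (v x) (A - x)"

definition position :: "real \<Rightarrow> real \<Rightarrow> real" where
  "position x t = x + v x * t + F1 * t\<^sup>2 / 2 + (F2 - F1) / 2 * ramp_sq (t - arrival_time x)"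

definition velocity :: "real \<Rightarrow> real \<Rightarrow> real" where
  "velocity x t = v x + F1 * t + (F2 - F1) * max (t - arrival_time x) 0"

definition stretch_at_arrival :: "real \<Rightarrow> real" where
  "stretch_at_arrival x = 1 + v' x * arrival_time x"

definition stretch_rate :: "real \<Rightarrow> real" where
  "stretch_rate x = v' x - (F1 - F2) * stretch_at_arrival x / arrival_speed x"

definition stretch :: "real \<Rightarrow> real \<Rightarrow> real" where
  "stretch x t = 1 + v' x * t - (F1 - F2) * max (t - arrival_time x) 0 * stretch_at_arrival x / arrival_speed x"

context
  fixes x :: real
  assumes x: "x \<in> {0..1}"
begin

lemma distance_pos: "0 < A - x"
  using x A_gt_1 by simp

lemma arrival_time_pos: "0 < arrival_time x"
  unfolding arrival_time_def using crossing_time_pos F1_pos v_nonneg[OF x] distance_pos by simp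

lemma arrival_speed_gt: "v x < arrival_speed x"
  unfolding arrival_speed_def using crossing_speed_gt F1_pos v_nonneg[OF x] distance_pos by simp

lemma arrival_speed_pos: "0 < arrival_speed x"
  using arrival_speed_gt v_nonneg[OF x] by linarith

lemma position_before:
  assumes "t \<le> arrival_time x"
  shows "position x t = x + v x * t + F1 * t\<^sup>2 / 2"
  using assms by (simp add: position_def ramp_sq_def)

lemma position_after:
  assumes "arrival_time x \<le> t"
  shows "position x t = A + arrival_speed x * (t - arrival_time x) + F2 * (t - arrival_time x)\<^sup>2 / 2"
proof -
  have "position x t = (x + v x * arrival_time x + F1 * (arrival_time x)\<^sup>2 / 2)
      + (v x + F1 * arrival_time x) * (t - arrival_time x) + F2 * (t - arrival_time x)\<^sup>2 / 2"
    using assms by (simp add: position_def ramp_sq_def field_simps power2_eq_square)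
  also have "\<dots> = A + arrival_speed x * (t - arrival_time x) + F2 * (t - arrival_time x)\<^sup>2 / 2"
    using crossing_distance[of F1 "v x" "A - x"] crossing_speed_eq[of F1 "v x" "A - x"]
      F1_pos v_nonneg[OF x] distance_pos
    unfolding arrival_time_def arrival_speed_def by simp
  finally show ?thesis .
qed

lemma position_below_A:
  assumes "0 \<le> t" "t < arrival_time x"
  shows "position x t < A"
  using before_crossing[of F1 "v x" "A - x" t] position_before[of t] assms F1_pos v_nonneg[OF x] distance_pos
  unfolding arrival_time_def by simp

lemma position_above_A:
  assumes "arrival_time x \<le> t"
  shows "A \<le> position x t"
proof -
  have "0 \<le> arrival_speed x * (t - arrival_time x)"
    using arrival_speed_pos assms by simp
  moreover have "0 \<le> F2 * (t - arrival_time x)\<^sup>2 / 2"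
    using F2_nonneg by simp
  ultimately show ?thesis
    using position_after[OF assms] by simp
qed

lemma trajectory_position: "trajectory force x (v x) (position x)"
proof (rule trajectoryI)
  show "(position x has_real_derivative velocity x t) (at t)" for t
    unfolding position_def[abs_def] velocity_def
    by (rule derivative_eq_intros refl | simp)+
  show "position x 0 = x" "velocity x 0 = v x"
    using arrival_time_pos by (simp_all add: position_def velocity_def ramp_sq_def)
  fix t :: real assume "0 \<le> t"
  have impulse: "((\<lambda>s. F1 + (F2 - F1) * (if arrival_time x \<le> s then 1 else 0)) has_integral
      (F1 * t + (F2 - F1) * max (t - arrival_time x) 0)) {0..t}"
    using has_integral_const_real[of F1 0 t] \<open>0 \<le> t\<close> arrival_time_pos
    by (intro has_integral_add has_integral_mult_right has_integral_step) (auto simp: mult.commute)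
  have pointwise: "F1 + (F2 - F1) * (if arrival_time x \<le> s then 1 else 0) = force (position x s)"
    if "s \<in> {0..t}" for s
    using position_below_A[of s] position_above_A[of s] that by (auto simp: force_def)
  show "((\<lambda>s. force (position x s)) has_integral (velocity x t - v x)) {0..t}"
    using has_integral_eq[OF pointwise impulse] unfolding velocity_def by simp
qed

lemma trajectory_unique:
  assumes "trajectory force x (v x) y" and "0 \<le> t"
  shows "y t = position x t"
proof -
  obtain y' where "motion force y y' (v x)" "y 0 = x" "y' 0 = v x"
    using assms(1) by (rule trajectoryE)
  then interpret motion force y y' "v x"
    by simp
  have force_nonneg: "0 \<le> force z" for z
    using F1_pos F2_nonneg by (simp add: force_def)
  have "x < A" "\<And>z. x \<le> z \<Longrightarrow> z < A \<Longrightarrow> force z = F1"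
    using distance_pos by (simp_all add: force_def)
  note crossing = motion_crossing[OF force_nonneg order_refl \<open>y 0 = x\<close> \<open>y' 0 = v x\<close>
      v_nonneg[OF x] F1_pos this, folded arrival_time_def arrival_speed_def, simplified]
  show ?thesis
  proof (cases "t \<le> arrival_time x")
    case True
    then show ?thesis
      using crossing(1)[of t] assms(2) position_before by simp
  next
    case False
    have "y t = y (arrival_time x) + y' (arrival_time x) * (t - arrival_time x) + F2 * (t - arrival_time x)\<^sup>2 / 2"
      using motion_beyond[of "arrival_time x" A F2 t] crossing(4) arrival_time_pos False x
      by (simp add: force_def)
    then show ?thesis
      using crossing(2,3) position_after False x by (simp add: force_def)
  qed
qed

lemma arrival_speed_has_derivative:
  "(arrival_speed has_real_derivative (v x * v' x - F1) / arrival_speed x) (at x within {0..1})"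
proof -
  have pos: "0 < (v x)\<^sup>2 + 2 * F1 * (A - x)"
    using F1_pos distance_pos by (simp add: add_nonneg_pos)
  have "((\<lambda>x. (v x)\<^sup>2 + 2 * F1 * (A - x)) has_real_derivative 2 * v x * v' x - 2 * F1) (at x within {0..1})"
    by (rule derivative_eq_intros v_deriv[OF x] refl | simp)+
  from DERIV_chain2[OF DERIV_real_sqrt[OF pos] this]
  have "(arrival_speed has_real_derivative inverse (arrival_speed x) / 2 * (2 * v x * v' x - 2 * F1))
      (at x within {0..1})"
    unfolding arrival_speed_def[abs_def] crossing_speed_def .
  moreover have "inverse (arrival_speed x) / 2 * (2 * v x * v' x - 2 * F1) = (v x * v' x - F1) / arrival_speed x"
    using arrival_speed_pos by (simp add: field_simps)
  ultimately show ?thesis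
    by (simp only:)
qed

lemma arrival_time_has_derivative:
  "(arrival_time has_real_derivative - stretch_at_arrival x / arrival_speed x) (at x within {0..1})"
proof -
  have "arrival_time = (\<lambda>x. (arrival_speed x - v x) / F1)"
    by (simp add: fun_eq_iff arrival_time_def arrival_speed_def crossing_time_def)
  moreover have "((\<lambda>x. (arrival_speed x - v x) / F1) has_real_derivative
      ((v x * v' x - F1) / arrival_speed x - v' x) / F1) (at x within {0..1})"
    by (intro DERIV_cdivide Deriv.field_differentiable_diff arrival_speed_has_derivative v_deriv[OF x])
  moreover have "((v x * v' x - F1) / arrival_speed x - v' x) / F1 = - stretch_at_arrival x / arrival_speed x"
    using F1_pos arrival_speed_pos
    by (simp add: stretch_at_arrival_def arrival_time_def crossing_time_def arrival_speed_def[symmetric]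
        field_simps)
  ultimately show ?thesis
    by simp
qed

lemma position_has_derivative_x:
  "((\<lambda>x. position x t) has_real_derivative stretch x t) (at x within {0..1})"
proof -
  have "((\<lambda>x. position x t) has_real_derivative
      1 + v' x * t + (F2 - F1) / 2 * (2 * max (t - arrival_time x) 0 * (- (- stretch_at_arrival x / arrival_speed x))))
      (at x within {0..1})"
    unfolding position_def
    by (rule derivative_eq_intros arrival_time_has_derivative v_deriv[OF x] refl | simp)+
  moreover have "1 + v' x * t + (F2 - F1) / 2 * (2 * max (t - arrival_time x) 0 *
      (- (- stretch_at_arrival x / arrival_speed x))) = stretch x t"
    using arrival_speed_pos by (simp add: stretch_def field_simps)
  ultimately show ?thesis
    by (simp only:)
qed

lemma stretch_after_arrival:
  assumes "arrival_time x \<le> t"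
  shows "stretch x t = stretch_at_arrival x + (t - arrival_time x) * stretch_rate x"
  using assms by (simp add: stretch_def stretch_rate_def stretch_at_arrival_def algebra_simps)

lemma stretch_pos:
  assumes J: "0 < stretch_at_arrival x" and K: "0 \<le> stretch_rate x" and "0 \<le> t"
  shows "0 < stretch x t"
proof (cases "t \<le> arrival_time x")
  case True
  have "min 1 (stretch_at_arrival x) \<le> 1 + v' x * t"
  proof (cases "0 \<le> v' x")
    case True
    then show ?thesis
      using \<open>0 \<le> t\<close> by (simp add: min_le_iff_disj)
  next
    case False
    then have "v' x * arrival_time x \<le> v' x * t"
      using \<open>t \<le> arrival_time x\<close> by (simp add: mult_left_mono_neg)
    then show ?thesis
      by (simp add: stretch_at_arrival_def min_le_iff_disj)
  qed
  then show ?thesis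
    using True J by (simp add: stretch_def)
next
  case False
  then show ?thesis
    using stretch_after_arrival[of t] J K by (simp add: add_pos_nonneg)
qed

lemma stretch_neg_somewhere:
  assumes "\<not> (0 < stretch_at_arrival x \<and> 0 \<le> stretch_rate x)"
  obtains t where "0 \<le> t" "stretch x t < 0"
proof -
  have "stretch_rate x < 0" if "stretch_at_arrival x = 0"
  proof -
    have "v' x * arrival_time x < 0"
      using that by (simp add: stretch_at_arrival_def)
    then have "v' x < 0"
      using arrival_time_pos by (simp add: mult_less_0_iff)
    then show ?thesis
      using that by (simp add: stretch_rate_def)
  qed
  then have "stretch_at_arrival x < 0 \<or> stretch_rate x < 0"
    using assms by force
  then obtain s where "0 < s" "stretch_at_arrival x + s * stretch_rate x < 0"
    using exists_pos_affine_neg by blast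
  then show ?thesis
    using that[of "arrival_time x + s"] stretch_after_arrival[of "arrival_time x + s"] arrival_time_pos
    by simp
qed

end

theorem no_collisions_iff:
  "no_collisions force v \<longleftrightarrow> (\<forall>x\<in>{0..1}. 0 < stretch_at_arrival x \<and> 0 \<le> stretch_rate x)"
proof
  assume nc: "no_collisions force v"
  show "\<forall>x\<in>{0..1}. 0 < stretch_at_arrival x \<and> 0 \<le> stretch_rate x"
  proof (rule ballI, rule ccontr)
    fix x :: real assume x: "x \<in> {0..1}" and "\<not> (0 < stretch_at_arrival x \<and> 0 \<le> stretch_rate x)"
    then obtain t where "0 \<le> t" "stretch x t < 0"
      by (rule stretch_neg_somewhere)
    moreover have "0 \<le> stretch x t"
      using deriv_nonneg_if_no_collisions[OF nc trajectory_position \<open>0 \<le> t\<close> x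
          DERIV_continuous_on[OF position_has_derivative_x] position_has_derivative_x[OF x]] .
    ultimately show False
      by simp
  qed
next
  assume conditions: "\<forall>x\<in>{0..1}. 0 < stretch_at_arrival x \<and> 0 \<le> stretch_rate x"
  show "no_collisions force v"
  proof (rule no_collisions_if_deriv_pos[where Y = position and Dx = "\<lambda>t x. stretch x t"])
    show "y t = position x t" if "x \<in> {0..1}" "trajectory force x (v x) y" "0 \<le> t" for x y t
      using trajectory_unique that .
    show "((\<lambda>x. position x t) has_real_derivative stretch x t) (at x within {0..1})" if "x \<in> {0..1}" for x t
      using position_has_derivative_x that .
    show "0 < stretch x t" if "x \<in> {0..1}" "0 \<le> t" for x t
      using stretch_pos that conditions by blast
  qed
qed

lemma explicit_condition_iff:
  assumes x: "x \<in> {0..1}"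
  shows "(let D = (v x)\<^sup>2 + 2 * F1 * (A - x) in
            - 2 * (A - x) * v' x < v x + sqrt D \<and> v' x * ((F1 - F2) * v x + F2 * sqrt D) \<ge> F1 * (F1 - F2))
    \<longleftrightarrow> 0 < stretch_at_arrival x \<and> 0 \<le> stretch_rate x"
proof -
  define w where "w = arrival_speed x"
  have sqrt_D: "sqrt ((v x)\<^sup>2 + 2 * F1 * (A - x)) = w"
    by (simp add: w_def arrival_speed_def crossing_speed_def)
  have "0 < w" "0 < w + v x"
    using arrival_speed_pos[OF x] v_nonneg[OF x] by (simp_all add: w_def)
  have "w\<^sup>2 = (v x)\<^sup>2 + 2 * F1 * (A - x)"
    unfolding w_def arrival_speed_def
    using crossing_speed_sq F1_pos v_nonneg[OF x] distance_pos[OF x] by blast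
  then have "(w - v x) * (w + v x) = 2 * F1 * (A - x)"
    by (simp add: algebra_simps power2_eq_square)
  have T: "arrival_time x = (w - v x) / F1"
    by (simp add: w_def arrival_time_def arrival_speed_def crossing_time_def)
  also have "(w - v x) / F1 = (w - v x) * (w + v x) / (F1 * (w + v x))"
    using \<open>0 < w + v x\<close> by simp
  also have "\<dots> = 2 * (A - x) / (w + v x)"
    unfolding \<open>(w - v x) * (w + v x) = 2 * F1 * (A - x)\<close> using F1_pos by simp
  finally have T': "arrival_time x = 2 * (A - x) / (w + v x)" .
  have "0 < stretch_at_arrival x \<longleftrightarrow> 0 < stretch_at_arrival x * (w + v x)"
    using \<open>0 < w + v x\<close> by (simp add: zero_less_mult_iff)
  also have "stretch_at_arrival x * (w + v x) = w + v x + 2 * (A - x) * v' x"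
    unfolding stretch_at_arrival_def T' using \<open>0 < w + v x\<close> by (simp add: field_simps)
  finally have J: "0 < stretch_at_arrival x \<longleftrightarrow> - 2 * (A - x) * v' x < v x + w"
    by (auto simp: algebra_simps)
  have "0 \<le> stretch_rate x \<longleftrightarrow> 0 \<le> stretch_rate x * (F1 * w)"
    using mult_le_cancel_right_pos[OF mult_pos_pos[OF F1_pos \<open>0 < w\<close>], of 0 "stretch_rate x"] by simp
  also have "stretch_rate x * (F1 * w) = v' x * ((F1 - F2) * v x + F2 * w) - F1 * (F1 - F2)"
    using \<open>0 < w\<close> F1_pos
    by (simp add: stretch_rate_def stretch_at_arrival_def T w_def[symmetric] field_simps)
  finally have K: "0 \<le> stretch_rate x \<longleftrightarrow> v' x * ((F1 - F2) * v x + F2 * w) \<ge> F1 * (F1 - F2)"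
    by simp
  show ?thesis
    unfolding Let_def sqrt_D J K by simp
qed

theorem no_collisions_iff_explicit_condition:
  "no_collisions force v \<longleftrightarrow>
    (\<forall>x\<in>{0..1}. let D = (v x)\<^sup>2 + 2 * F1 * (A - x) in
       - 2 * (A - x) * v' x < v x + sqrt D \<and> v' x * ((F1 - F2) * v x + F2 * sqrt D) \<ge> F1 * (F1 - F2))"
  using no_collisions_iff explicit_condition_iff by simp

theorem no_collisions_iff_uniform_velocity:
  assumes "\<And>x. x \<in> {0..1} \<Longrightarrow> v' x = 0"
  shows "no_collisions force v \<longleftrightarrow> F1 \<le> F2"
proof -
  have "0 < stretch_at_arrival x \<and> 0 \<le> stretch_rate x \<longleftrightarrow> F1 \<le> F2" if "x \<in> {0..1}" for x
    using assms[OF that] arrival_speed_pos[OF that]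
    by (simp add: stretch_at_arrival_def stretch_rate_def divide_le_0_iff)
  moreover have "(0::real) \<in> {0..1}"
    by simp
  ultimately show ?thesis
    unfolding no_collisions_iff by blast
qed

end

section \<open>Two gaps\<close>

locale two_gaps =
  fixes F1 F2 F3 A B :: real and v :: "real \<Rightarrow> real"
  assumes F2_pos: "0 < F2" and F2_lt_F1: "F2 < F1" and F2_lt_F3: "F2 < F3"
    and A_gt_1: "1 < A" and A_lt_B: "A < B"
    and v_zero: "\<And>x. x \<in> {0..1} \<Longrightarrow> v x = 0"
begin

lemma F1_pos: "0 < F1"
  using F2_pos F2_lt_F1 by simp

definition force :: "real \<Rightarrow> real" where
  "force = (\<lambda>z. if z < A then F1 else if z < B then F2 else F3)"

definition speed_at_A :: "real \<Rightarrow> real" where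
  "speed_at_A x = crossing_speed F1 0 (A - x)"

definition time_at_A :: "real \<Rightarrow> real" where
  "time_at_A x = crossing_time F1 0 (A - x)"

definition speed_at_B :: "real \<Rightarrow> real" where
  "speed_at_B x = crossing_speed F2 (speed_at_A x) (B - A)"

definition time_at_B :: "real \<Rightarrow> real" where
  "time_at_B x = time_at_A x + crossing_time F2 (speed_at_A x) (B - A)"

definition position :: "real \<Rightarrow> real \<Rightarrow> real" where
  "position x t = x + F1 * t\<^sup>2 / 2 + (F2 - F1) / 2 * ramp_sq (t - time_at_A x)
    + (F3 - F2) / 2 * ramp_sq (t - time_at_B x)"

definition velocity :: "real \<Rightarrow> real \<Rightarrow> real" where
  "velocity x t = F1 * t + (F2 - F1) * max (t - time_at_A x) 0 + (F3 - F2) * max (t - time_at_B x) 0"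

definition stretch_at_B :: "real \<Rightarrow> real" where
  "stretch_at_B x = 1 - (F1 - F2) * (time_at_B x - time_at_A x) / speed_at_A x"

definition stretch_rate :: "real \<Rightarrow> real" where
  "stretch_rate x = (F3 * stretch_at_B x - F1) / speed_at_B x"

definition stretch :: "real \<Rightarrow> real \<Rightarrow> real" where
  "stretch x t = 1 - (F1 - F2) * max (t - time_at_A x) 0 / speed_at_A x
    + (F3 - F2) * max (t - time_at_B x) 0 * stretch_at_B x / speed_at_B x"

context
  fixes x :: real
  assumes x: "x \<in> {0..1}"
begin

lemma distance_pos: "0 < A - x"
  using x A_gt_1 by simp

lemma speed_at_A_pos: "0 < speed_at_A x"
  unfolding speed_at_A_def using crossing_speed_gt F1_pos distance_pos by simp

lemma speed_at_A_lt_B: "speed_at_A x < speed_at_B x"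
  unfolding speed_at_B_def using crossing_speed_gt F2_pos speed_at_A_pos A_lt_B by simp

lemma time_at_A_pos: "0 < time_at_A x"
  unfolding time_at_A_def using crossing_time_pos F1_pos distance_pos by simp

lemma time_at_A_lt_B: "time_at_A x < time_at_B x"
  unfolding time_at_B_def using crossing_time_pos F2_pos speed_at_A_pos A_lt_B by simp

lemma position_phase1:
  assumes "t \<le> time_at_A x"
  shows "position x t = x + F1 * t\<^sup>2 / 2"
  using assms time_at_A_lt_B by (simp add: position_def ramp_sq_def)

lemma arrival_at_A: "x + F1 * (time_at_A x)\<^sup>2 / 2 = A"
  using crossing_distance[of F1 0 "A - x"] F1_pos distance_pos unfolding time_at_A_def
  by (simp add: field_simps)

lemma speed_at_A_eq: "F1 * time_at_A x = speed_at_A x"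
  using crossing_speed_eq[of F1 0 "A - x"] F1_pos distance_pos
  unfolding time_at_A_def speed_at_A_def by simp

lemma arrival_at_B:
  "A + speed_at_A x * (time_at_B x - time_at_A x) + F2 * (time_at_B x - time_at_A x)\<^sup>2 / 2 = B"
  using crossing_distance[of F2 "speed_at_A x" "B - A"] F2_pos speed_at_A_pos A_lt_B
  unfolding time_at_B_def by simp

lemma speed_at_B_eq: "speed_at_A x + F2 * (time_at_B x - time_at_A x) = speed_at_B x"
  using crossing_speed_eq[of F2 "speed_at_A x" "B - A"] F2_pos speed_at_A_pos A_lt_B
  unfolding time_at_B_def speed_at_B_def by simp

lemma position_phase2:
  assumes "time_at_A x \<le> t" "t \<le> time_at_B x"
  shows "position x t = A + speed_at_A x * (t - time_at_A x) + F2 * (t - time_at_A x)\<^sup>2 / 2"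
proof -
  have "position x t = (x + F1 * (time_at_A x)\<^sup>2 / 2) + F1 * time_at_A x * (t - time_at_A x)
      + F2 * (t - time_at_A x)\<^sup>2 / 2"
    using assms by (simp add: position_def ramp_sq_def field_simps power2_eq_square)
  then show ?thesis
    unfolding arrival_at_A speed_at_A_eq .
qed

lemma position_phase3:
  assumes "time_at_B x \<le> t"
  shows "position x t = B + speed_at_B x * (t - time_at_B x) + F3 * (t - time_at_B x)\<^sup>2 / 2"
proof -
  define \<tau> where "\<tau> = time_at_B x - time_at_A x"
  have "position x t = (x + F1 * (time_at_A x)\<^sup>2 / 2) + F1 * time_at_A x * \<tau> + F2 * \<tau>\<^sup>2 / 2
      + (F1 * time_at_A x + F2 * \<tau>) * (t - time_at_B x) + F3 * (t - time_at_B x)\<^sup>2 / 2"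
    using assms time_at_A_lt_B
    by (simp add: position_def ramp_sq_def \<tau>_def field_simps power2_eq_square)
  then show ?thesis
    unfolding arrival_at_A speed_at_A_eq \<tau>_def arrival_at_B speed_at_B_eq .
qed

lemma force_position:
  assumes "0 \<le> t"
  shows "force (position x t) = F1 + (F2 - F1) * (if time_at_A x \<le> t then 1 else 0)
    + (F3 - F2) * (if time_at_B x \<le> t then 1 else 0)"
proof -
  consider "t < time_at_A x" | "time_at_A x \<le> t" "t < time_at_B x" | "time_at_B x \<le> t"
    by linarith
  then show ?thesis
  proof cases
    case 1
    then have "position x t < A"
      using before_crossing[of F1 0 "A - x" t] position_phase1 assms F1_pos distance_pos
      unfolding time_at_A_def by simp
    then show ?thesis
      using 1 time_at_A_lt_B by (simp add: force_def)
  next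
    case 2
    have "0 \<le> speed_at_A x * (t - time_at_A x) + F2 * (t - time_at_A x)\<^sup>2 / 2"
      using speed_at_A_pos F2_pos 2 by simp
    moreover have "speed_at_A x * (t - time_at_A x) + F2 * (t - time_at_A x)\<^sup>2 / 2 < B - A"
      using before_crossing[of F2 "speed_at_A x" "B - A" "t - time_at_A x"] 2 F2_pos speed_at_A_pos A_lt_B
      unfolding time_at_B_def by simp
    ultimately show ?thesis
      using 2 position_phase2 by (simp add: force_def)
  next
    case 3
    have "0 \<le> speed_at_B x * (t - time_at_B x) + F3 * (t - time_at_B x)\<^sup>2 / 2"
      using speed_at_A_pos speed_at_A_lt_B F2_pos F2_lt_F3 3 by simp
    then show ?thesis
      using 3 position_phase3 time_at_A_lt_B A_lt_B by (simp add: force_def)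
  qed
qed

lemma trajectory_position: "trajectory force x (v x) (position x)"
proof (rule trajectoryI)
  show "(position x has_real_derivative velocity x t) (at t)" for t
    unfolding position_def[abs_def] velocity_def
    by (rule derivative_eq_intros refl | simp)+
  show "position x 0 = x" "velocity x 0 = v x"
    using time_at_A_pos time_at_A_lt_B v_zero[OF x]
    by (simp_all add: position_def velocity_def ramp_sq_def)
  fix t :: real assume "0 \<le> t"
  have impulse: "((\<lambda>s. F1 + (F2 - F1) * (if time_at_A x \<le> s then 1 else 0)
      + (F3 - F2) * (if time_at_B x \<le> s then 1 else 0)) has_integral velocity x t) {0..t}"
    unfolding velocity_def
    using has_integral_const_real[of F1 0 t] \<open>0 \<le> t\<close> time_at_A_pos time_at_A_lt_B
    by (intro has_integral_add has_integral_mult_right has_integral_step) (auto simp: mult.commute)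
  have pointwise: "F1 + (F2 - F1) * (if time_at_A x \<le> s then 1 else 0)
      + (F3 - F2) * (if time_at_B x \<le> s then 1 else 0) = force (position x s)" if "s \<in> {0..t}" for s
    using force_position that by simp
  show "((\<lambda>s. force (position x s)) has_integral (velocity x t - v x)) {0..t}"
    using has_integral_eq[OF pointwise impulse] v_zero[OF x] by simp
qed

lemma trajectory_unique:
  assumes "trajectory force x (v x) y" and "0 \<le> t"
  shows "y t = position x t"
proof -
  obtain y' where "motion force y y' (v x)" "y 0 = x" "y' 0 = 0"
    using assms(1) v_zero[OF x] by (auto elim: trajectoryE)
  then interpret motion force y y' "v x"
    by simp
  have force_nonneg: "0 \<le> force z" for z
    using F1_pos F2_pos F2_lt_F3 by (simp add: force_def)
  have "x < A" "\<And>z. x \<le> z \<Longrightarrow> z < A \<Longrightarrow> force z = F1"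
    using distance_pos by (simp_all add: force_def)
  note cross_A = motion_crossing[OF force_nonneg order_refl \<open>y 0 = x\<close> \<open>y' 0 = 0\<close> order_refl F1_pos this,
      folded time_at_A_def speed_at_A_def, simplified]
  have "\<And>z. A \<le> z \<Longrightarrow> z < B \<Longrightarrow> force z = F2"
    by (simp add: force_def)
  note cross_B = motion_crossing[OF force_nonneg less_imp_le[OF time_at_A_pos] cross_A(2,3)
      less_imp_le[OF speed_at_A_pos] F2_pos A_lt_B this, folded time_at_B_def speed_at_B_def]
  have "\<And>z. B \<le> z \<Longrightarrow> force z = F3"
    using A_lt_B by (simp add: force_def)
  note beyond = motion_beyond[OF _ cross_B(4) this]
  consider "t \<le> time_at_A x" | "time_at_A x \<le> t" "t \<le> time_at_B x" | "time_at_B x \<le> t"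
    by linarith
  then show ?thesis
  proof cases
    case 1
    then show ?thesis
      using cross_A(1) position_phase1 assms(2) by simp
  next
    case 2
    then show ?thesis
      using cross_B(1) position_phase2 by simp
  next
    case 3
    have "y t = y (time_at_B x) + y' (time_at_B x) * (t - time_at_B x) + F3 * (t - time_at_B x)\<^sup>2 / 2"
      by (rule beyond) (use 3 time_at_A_pos time_at_A_lt_B in linarith)+
    then show ?thesis
      unfolding position_phase3[OF 3] by (simp only: cross_B(2,3))
  qed
qed

lemma speed_at_B_pos: "0 < speed_at_B x"
  using speed_at_A_pos speed_at_A_lt_B by linarith

lemma time_between_A_and_B: "time_at_B x - time_at_A x = (speed_at_B x - speed_at_A x) / F2"
  by (simp add: time_at_B_def crossing_time_def speed_at_B_def)

lemma stretch_at_B_eq: "stretch_at_B x = (F1 * speed_at_A x - (F1 - F2) * speed_at_B x) / (F2 * speed_at_A x)"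
  using speed_at_A_pos F2_pos
  by (simp add: stretch_at_B_def time_between_A_and_B field_simps)

lemma speed_at_A_has_derivative: "(speed_at_A has_real_derivative - F1 / speed_at_A x) (at x within {0..1})"
proof -
  have pos: "0 < 2 * F1 * (A - x)"
    using F1_pos distance_pos by simp
  have "((\<lambda>x. 2 * F1 * (A - x)) has_real_derivative - 2 * F1) (at x within {0..1})"
    by (rule derivative_eq_intros refl | simp)+
  from DERIV_chain2[OF DERIV_real_sqrt[OF pos] this]
  have "(speed_at_A has_real_derivative inverse (speed_at_A x) / 2 * (- 2 * F1)) (at x within {0..1})"
    unfolding speed_at_A_def[abs_def] crossing_speed_def by simp
  moreover have "inverse (speed_at_A x) / 2 * (- 2 * F1) = - F1 / speed_at_A x"
    by (simp add: field_simps)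
  ultimately show ?thesis
    by (simp only:)
qed

lemma time_at_A_has_derivative: "(time_at_A has_real_derivative - 1 / speed_at_A x) (at x within {0..1})"
proof -
  have "time_at_A = (\<lambda>x. speed_at_A x / F1)"
    by (simp add: fun_eq_iff time_at_A_def speed_at_A_def crossing_time_def)
  then show ?thesis
    using DERIV_cdivide[OF speed_at_A_has_derivative, of F1] F1_pos by simp
qed

lemma speed_at_B_has_derivative: "(speed_at_B has_real_derivative - F1 / speed_at_B x) (at x within {0..1})"
proof -
  have pos: "0 < (speed_at_A x)\<^sup>2 + 2 * F2 * (B - A)"
    using F2_pos A_lt_B by (simp add: add_nonneg_pos)
  have "((\<lambda>x. (speed_at_A x)\<^sup>2 + 2 * F2 * (B - A)) has_real_derivative
      2 * speed_at_A x * (- F1 / speed_at_A x)) (at x within {0..1})"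
    by (rule derivative_eq_intros speed_at_A_has_derivative refl | simp)+
  from DERIV_chain2[OF DERIV_real_sqrt[OF pos] this]
  have "(speed_at_B has_real_derivative inverse (speed_at_B x) / 2 * (2 * speed_at_A x * (- F1 / speed_at_A x)))
      (at x within {0..1})"
    unfolding speed_at_B_def[abs_def] crossing_speed_def .
  moreover have "inverse (speed_at_B x) / 2 * (2 * speed_at_A x * (- F1 / speed_at_A x)) = - F1 / speed_at_B x"
    using speed_at_A_pos by (simp add: field_simps)
  ultimately show ?thesis
    by (simp only:)
qed

lemma time_at_B_has_derivative:
  "(time_at_B has_real_derivative - stretch_at_B x / speed_at_B x) (at x within {0..1})"
proof -
  have "time_at_B = (\<lambda>x. time_at_A x + (speed_at_B x - speed_at_A x) / F2)"
    by (simp add: fun_eq_iff time_at_B_def crossing_time_def speed_at_B_def)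
  moreover have "((\<lambda>x. time_at_A x + (speed_at_B x - speed_at_A x) / F2) has_real_derivative
      - 1 / speed_at_A x + (- F1 / speed_at_B x - - F1 / speed_at_A x) / F2) (at x within {0..1})"
    by (intro DERIV_add DERIV_cdivide Deriv.field_differentiable_diff time_at_A_has_derivative
        speed_at_A_has_derivative speed_at_B_has_derivative)
  moreover have "- 1 / speed_at_A x + (- F1 / speed_at_B x - - F1 / speed_at_A x) / F2
      = - stretch_at_B x / speed_at_B x"
    unfolding stretch_at_B_eq using speed_at_A_pos speed_at_B_pos F2_pos by (simp add: field_simps)
  ultimately show ?thesis
    by simp
qed

lemma position_has_derivative_x:
  "((\<lambda>x. position x t) has_real_derivative stretch x t) (at x within {0..1})"
proof -
  have "((\<lambda>x. position x t) has_real_derivative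
      1 + max (t - time_at_A x) 0 * (F2 - F1) / speed_at_A x
        + max (t - time_at_B x) 0 * (stretch_at_B x * (F3 - F2)) / speed_at_B x)
      (at x within {0..1})"
    unfolding position_def
    by (rule derivative_eq_intros time_at_A_has_derivative time_at_B_has_derivative refl | simp)+
  moreover have "1 + max (t - time_at_A x) 0 * (F2 - F1) / speed_at_A x
        + max (t - time_at_B x) 0 * (stretch_at_B x * (F3 - F2)) / speed_at_B x = stretch x t"
    by (simp add: stretch_def algebra_simps diff_divide_distrib)
  ultimately show ?thesis
    by (simp only:)
qed

lemma stretch_at_B_identity: "(F1 - F2) / speed_at_A x + F2 * stretch_at_B x / speed_at_B x = F1 / speed_at_B x"
  unfolding stretch_at_B_eq using speed_at_A_pos speed_at_B_pos F2_pos by (simp add: field_simps)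

lemma stretch_after_B:
  assumes "time_at_B x \<le> t"
  shows "stretch x t = stretch_at_B x + (t - time_at_B x) * stretch_rate x"
proof -
  define s where "s = t - time_at_B x"
  have "stretch x t = stretch_at_B x - (F1 - F2) * s / speed_at_A x + (F3 - F2) * s * stretch_at_B x / speed_at_B x"
    using assms time_at_A_lt_B
    by (simp add: stretch_def stretch_at_B_def s_def diff_divide_distrib add_divide_distrib ring_distribs)
  also have "\<dots> = stretch_at_B x + s * ((F3 - F2) * stretch_at_B x / speed_at_B x - (F1 - F2) / speed_at_A x)"
    by (simp add: algebra_simps)
  also have "(F3 - F2) * stretch_at_B x / speed_at_B x - (F1 - F2) / speed_at_A x = stretch_rate x"
    using stretch_at_B_identity by (simp add: stretch_rate_def diff_divide_distrib algebra_simps)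
  finally show ?thesis
    by (simp add: s_def)
qed

lemma stretch_at_B_pos:
  assumes "0 \<le> stretch_rate x"
  shows "0 < stretch_at_B x"
proof -
  have "F1 \<le> F3 * stretch_at_B x"
  proof (rule ccontr)
    assume "\<not> F1 \<le> F3 * stretch_at_B x"
    then have "stretch_rate x < 0"
      unfolding stretch_rate_def using speed_at_B_pos by (intro divide_neg_pos) auto
    with assms show False
      by simp
  qed
  then have "0 < F3 * stretch_at_B x"
    using F1_pos by linarith
  moreover have "0 < F3"
    using F2_pos F2_lt_F3 by linarith
  ultimately show ?thesis
    by (simp add: zero_less_mult_iff)
qed

lemma stretch_pos:
  assumes K: "0 \<le> stretch_rate x" and "0 \<le> t"
  shows "0 < stretch x t"
proof -
  have J: "0 < stretch_at_B x"
    using stretch_at_B_pos[OF K] .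
  consider "t \<le> time_at_A x" | "time_at_A x \<le> t" "t \<le> time_at_B x" | "time_at_B x \<le> t"
    by linarith
  then show ?thesis
  proof cases
    case 1
    then show ?thesis
      using time_at_A_lt_B by (simp add: stretch_def)
  next
    case 2
    have "(F1 - F2) * (t - time_at_A x) / speed_at_A x \<le> (F1 - F2) * (time_at_B x - time_at_A x) / speed_at_A x"
      using 2 F2_lt_F1 speed_at_A_pos by (intro divide_right_mono mult_left_mono) auto
    then show ?thesis
      using 2 J by (simp add: stretch_def stretch_at_B_def)
  next
    case 3
    then show ?thesis
      using stretch_after_B J K by (simp add: add_pos_nonneg)
  qed
qed

lemma stretch_neg_somewhere:
  assumes "stretch_rate x < 0"
  obtains t where "0 \<le> t" "stretch x t < 0"
proof -
  obtain s where "0 < s" "stretch_at_B x + s * stretch_rate x < 0"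
    using exists_pos_affine_neg assms by blast
  then show ?thesis
    using that[of "time_at_B x + s"] stretch_after_B[of "time_at_B x + s"] time_at_A_pos
      time_at_A_lt_B by simp
qed

end

theorem no_collisions_iff: "no_collisions force v \<longleftrightarrow> (\<forall>x\<in>{0..1}. 0 \<le> stretch_rate x)"
proof
  assume nc: "no_collisions force v"
  show "\<forall>x\<in>{0..1}. 0 \<le> stretch_rate x"
  proof (rule ballI, rule ccontr)
    fix x :: real assume x: "x \<in> {0..1}" and "\<not> 0 \<le> stretch_rate x"
    then have "stretch_rate x < 0"
      by simp
    then obtain t where "0 \<le> t" "stretch x t < 0"
      by (rule stretch_neg_somewhere[OF x])
    moreover have "0 \<le> stretch x t"
      using deriv_nonneg_if_no_collisions[OF nc trajectory_position \<open>0 \<le> t\<close> x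
          DERIV_continuous_on[OF position_has_derivative_x] position_has_derivative_x[OF x]] .
    ultimately show False
      by simp
  qed
next
  assume rate_nonneg: "\<forall>x\<in>{0..1}. 0 \<le> stretch_rate x"
  show "no_collisions force v"
  proof (rule no_collisions_if_deriv_pos[where Y = position and Dx = "\<lambda>t x. stretch x t"])
    show "y t = position x t" if "x \<in> {0..1}" "trajectory force x (v x) y" "0 \<le> t" for x y t
      using trajectory_unique that .
    show "((\<lambda>x. position x t) has_real_derivative stretch x t) (at x within {0..1})" if "x \<in> {0..1}" for x t
      using position_has_derivative_x that .
    show "0 < stretch x t" if "x \<in> {0..1}" "0 \<le> t" for x t
      using stretch_pos that rate_nonneg by blast
  qed
qed

definition critical_ratio :: real where
  "critical_ratio = F1 * (F3 - F1) * (F3 * (F1 - F2) + F1 * (F3 - F2)) / ((F1 - F2)\<^sup>2 * F3\<^sup>2)"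

lemma stretch_rate_nonneg_iff:
  assumes x: "x \<in> {0..1}"
  shows "0 \<le> stretch_rate x \<longleftrightarrow> B - A \<le> critical_ratio * (A - x)"
proof -
  define a c where "a = speed_at_A x" and "c = speed_at_B x"
  define P R where "P = F3 * (F1 - F2)" and "R = F1 * (F3 - F2)"
  have "0 < a" "0 < c" "0 < P" "0 < R"
    using speed_at_A_pos[OF x] speed_at_B_pos[OF x] F1_pos F2_pos F2_lt_F1 F2_lt_F3
    by (simp_all add: a_def c_def P_def R_def)
  have a_sq: "a\<^sup>2 = 2 * F1 * (A - x)"
    using crossing_speed_sq[of F1 0 "A - x"] F1_pos distance_pos[OF x] by (simp add: a_def speed_at_A_def)
  have c_sq: "c\<^sup>2 = a\<^sup>2 + 2 * F2 * (B - A)"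
    using crossing_speed_sq[of F2 a "B - A"] F2_pos \<open>0 < a\<close> A_lt_B by (simp add: a_def c_def speed_at_B_def)
  have "0 \<le> stretch_rate x \<longleftrightarrow> F1 \<le> F3 * stretch_at_B x"
    using \<open>0 < c\<close> by (simp add: stretch_rate_def c_def zero_le_divide_iff)
  also have "\<dots> \<longleftrightarrow> F1 * (F2 * a) \<le> F3 * (F1 * a - (F1 - F2) * c)"
    using \<open>0 < a\<close> F2_pos by (simp add: stretch_at_B_eq[OF x] a_def c_def field_simps)
  also have "\<dots> \<longleftrightarrow> P * c \<le> R * a"
    by (simp add: P_def R_def algebra_simps)
  also have "\<dots> \<longleftrightarrow> (P * c)\<^sup>2 \<le> (R * a)\<^sup>2"
    using \<open>0 < a\<close> \<open>0 < c\<close> \<open>0 < P\<close> \<open>0 < R\<close> by (simp add: abs_le_square_iff[symmetric])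
  also have "\<dots> \<longleftrightarrow> 2 * F2 * P\<^sup>2 * (B - A) \<le> (R\<^sup>2 - P\<^sup>2) * (2 * F1 * (A - x))"
    unfolding power_mult_distrib c_sq a_sq[symmetric] by (simp add: algebra_simps)
  also have "(R\<^sup>2 - P\<^sup>2) * (2 * F1 * (A - x)) = 2 * F2 * P\<^sup>2 * (critical_ratio * (A - x))"
  proof -
    have "P\<^sup>2 = (F1 - F2)\<^sup>2 * F3\<^sup>2"
      by (simp add: P_def power_mult_distrib mult.commute)
    then have "critical_ratio = F1 * (F3 - F1) * (P + R) / P\<^sup>2"
      unfolding critical_ratio_def by (simp add: P_def R_def)
    then have "critical_ratio * (2 * F2 * P\<^sup>2) = F1 * (F3 - F1) * (P + R) * (2 * F2)"
      using \<open>0 < P\<close> by simp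
    also have "\<dots> = (R - P) * (R + P) * (2 * F1)"
      by (simp add: P_def R_def algebra_simps)
    finally have "critical_ratio * (2 * F2 * P\<^sup>2) = (R\<^sup>2 - P\<^sup>2) * (2 * F1)"
      by (simp add: power2_eq_square algebra_simps)
    from arg_cong[OF this, of "\<lambda>z. z * (A - x)"] show ?thesis
      by (simp add: algebra_simps)
  qed
  also have "2 * F2 * P\<^sup>2 * (B - A) \<le> 2 * F2 * P\<^sup>2 * (critical_ratio * (A - x))
      \<longleftrightarrow> B - A \<le> critical_ratio * (A - x)"
    using F2_pos \<open>0 < P\<close> by simp
  finally show ?thesis .
qed

theorem no_collisions_iff_gap_bound: "no_collisions force v \<longleftrightarrow> B - A \<le> critical_ratio * (A - 1)"
proof -
  have "(\<forall>x\<in>{0..1}. 0 \<le> stretch_rate x) \<longleftrightarrow> B - A \<le> critical_ratio * (A - 1)"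
  proof
    assume "\<forall>x\<in>{0..1}. 0 \<le> stretch_rate x"
    then show "B - A \<le> critical_ratio * (A - 1)"
      using stretch_rate_nonneg_iff[of 1] by simp
  next
    assume bound: "B - A \<le> critical_ratio * (A - 1)"
    then have "0 < critical_ratio * (A - 1)"
      using A_lt_B by linarith
    then have "0 < critical_ratio"
      using A_gt_1 by (simp add: zero_less_mult_iff)
    then have "critical_ratio * (A - 1) \<le> critical_ratio * (A - x)" if "x \<in> {0..1}" for x
      using that by (simp add: mult_left_mono)
    then show "\<forall>x\<in>{0..1}. 0 \<le> stretch_rate x"
      using bound stretch_rate_nonneg_iff by fastforce
  qed
  then show ?thesis
    using no_collisions_iff by simp
qed

end

lemma no_collisions_one_gap_at_rest:
  fixes F1 F2 A :: real and v :: "real \<Rightarrow> real"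
  assumes "0 < F1" "0 \<le> F2" "1 < A" and v: "\<And>x. x \<in> {0..1} \<Longrightarrow> v x = 0"
  shows "no_collisions (\<lambda>y. if y < A then F1 else F2) v \<longleftrightarrow> F1 \<le> F2"
proof -
  have v_deriv: "(v has_real_derivative 0) (at x within {0..1})" if "x \<in> {0..1}" for x
    by (rule has_field_derivative_transform_within[of "\<lambda>_. 0" 0 x "{0..1}" 1]) (use v that in simp_all)
  interpret one_gap F1 F2 A v "\<lambda>_. 0"
    by unfold_locales (simp_all add: assms v_deriv)
  show ?thesis
    using no_collisions_iff_uniform_velocity unfolding force_def by simp
qed

lemma no_collisions_one_gap:
  fixes F1 F2 A :: real and v v' :: "real \<Rightarrow> real"
  assumes "0 < F1" "0 \<le> F2" "1 < A"
    and "\<And>x. x \<in> {0..1} \<Longrightarrow> (v has_real_derivative v' x) (at x within {0..1})"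
    and "\<And>x. x \<in> {0..1} \<Longrightarrow> 0 \<le> v x"
  shows "no_collisions (\<lambda>y. if y < A then F1 else F2) v \<longleftrightarrow>
    (\<forall>x\<in>{0..1}. let D = (v x)\<^sup>2 + 2 * F1 * (A - x) in
       - 2 * (A - x) * v' x < v x + sqrt D \<and> v' x * ((F1 - F2) * v x + F2 * sqrt D) \<ge> F1 * (F1 - F2))"
proof -
  interpret one_gap F1 F2 A v v'
    by (rule one_gap.intro) (fact assms)+
  show ?thesis
    using no_collisions_iff_explicit_condition unfolding force_def .
qed

lemma no_collisions_two_gaps_at_rest:
  fixes F1 F2 F3 A B :: real and v :: "real \<Rightarrow> real"
  assumes "0 < F2" "F2 < F1" "F2 < F3" "1 < A" "A < B" "\<And>x. x \<in> {0..1} \<Longrightarrow> v x = 0"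
  shows "no_collisions (\<lambda>y. if y < A then F1 else if y < B then F2 else F3) v \<longleftrightarrow>
    B - A \<le> F1 * (F3 - F1) * (F3 * (F1 - F2) + F1 * (F3 - F2)) / ((F1 - F2)\<^sup>2 * F3\<^sup>2) * (A - 1)"
proof -
  interpret two_gaps F1 F2 F3 A B v
    by (rule two_gaps.intro) (fact assms)+
  show ?thesis
    using no_collisions_iff_gap_bound unfolding force_def critical_ratio_def .
qed

theorem theorem3:
  shows "(\<forall>(F1::real) (F2::real) (A::real) (v::real \<Rightarrow> real).
            F1 > 0 \<and> F2 \<ge> 0 \<and> A > 1 \<and> (\<forall>x\<in>{0..1}. v x = 0) \<longrightarrow>
            (no_collisions (\<lambda>y. if y < A then F1 else F2) v \<longleftrightarrow> F2 \<ge> F1))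
       \<and> (\<forall>(F1::real) (F2::real) (A::real) (v::real \<Rightarrow> real) (v'::real \<Rightarrow> real).
            F1 > 0 \<and> F2 \<ge> 0 \<and> A > 1 \<and>
            (\<forall>x\<in>{0..1}. (v has_real_derivative v' x) (at x within {0..1})) \<and>
            continuous_on {0..1} v' \<and>
            (\<forall>x\<in>{0..1}. v x \<ge> 0) \<longrightarrow>
            (no_collisions (\<lambda>y. if y < A then F1 else F2) v \<longleftrightarrow>
              (\<forall>x\<in>{0..1}.
                 let D = (v x)\<^sup>2 + 2 * F1 * (A - x) in
                 - 2 * (A - x) * v' x < v x + sqrt D \<and>
                 v' x * ((F1 - F2) * v x + F2 * sqrt D) \<ge> F1 * (F1 - F2))))
       \<and> (\<forall>(F1::real) (F2::real) (F3::real) (A::real) (B::real) (v::real \<Rightarrow> real).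
            (\<forall>x\<in>{0..1}. v x = 0) \<and> 0 < F2 \<and> F2 < F1 \<and> F2 < F3 \<and> 1 < A \<and> A < B \<longrightarrow>
            (no_collisions (\<lambda>y. if y < A then F1 else if y < B then F2 else F3) v \<longleftrightarrow>
              B - A \<le> (F1 * (F3 - F1) * (F3 * (F1 - F2) + F1 * (F3 - F2))
                        / ((F1 - F2)\<^sup>2 * F3\<^sup>2)) * (A - 1)))"
  by (intro conjI allI impI; elim conjE;
      rule no_collisions_one_gap_at_rest no_collisions_one_gap no_collisions_two_gaps_at_rest; simp)

end
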